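(* Let $\Gamma=A\ast B$ with $A,B$ non-trivial, let $f=f_A\ast f_B$ be a split quasimorphism, and let $\sigma$ be an inner automorphism of $\Gamma$. Then $f$ is at bounded distance from $f^\sigma$; in particular $\omega_f=\omega_{f^\sigma}$ and $S=S^\sigma$. Consequently, for $\tau\in\mathrm{Aut}(\Gamma)$ the space $S^\tau$ only depends on the outer class of $\tau$.
   Context: Quasimorphisms $f_A:A\to\mathbb{R}$, $f_B:B\to\mathbb{R}$ are alternating ($f(x^{-1})=-f(x)$). For a free product $P\ast Q$, each non-trivial element has a unique normal form $p_1q_1\cdots p_nq_n$ ($p_i\in P$, $q_i\in Q$, all non-trivial except possibly $p_1$ or $q_n$), and the split quasimorphism is $(f_P\ast f_Q)(1)=0$, $(f_P\ast f_Q)(p_1q_1\cdots p_nq_n)=f_P(p_1)+f_Q(q_1)+\dots+f_P(p_n)+f_Q(q_n)$. For $\tau\in\mathrm{Aut}(\Gamma)$, $\Gamma=\tau(A)\ast\tau(B)$ is again a splitting, and $f^\tau:=f_{\tau(A)}\ast f_{\tau(B)}$ (split with respect to this splitting) where $f_{\tau(A)}=f_A\circ\tau^{-1}|_{\tau(A)}$, $f_{\tau(B)}=f_B\circ\tau^{-1}|_{\tau(B)}$. $\omega_f\in\mathrm{H}^2_\mathrm{b}(\Gamma,\mathbb{R})$ is the bounded class of $\partial f(g,h)=f(g)+f(h)-f(gh)$. $S\subset\mathrm{H}^2_\mathrm{b}(\Gamma,\mathbb{R})$ is the space of split classes of the splitting $A\ast B$, i.e. the set of classes $\omega_{f_A\ast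 f_B}$ with $f_A,f_B$ bounded alternating functions on $A,B$; $S^\tau$ is the corresponding space for the splitting $\tau(A)\ast\tau(B)$. *)

theory Defs
  imports "HOL-Algebra.Algebra"
begin

definition word_prod :: "('a, 'b) monoid_scheme \<Rightarrow> 'a list \<Rightarrow> 'a" where
  "word_prod G ws = foldr (\<lambda>x y. x \<otimes>\<^bsub>G\<^esub> y) ws \<one>\<^bsub>G\<^esub>"

definition reduced_word :: "('a, 'b) monoid_scheme \<Rightarrow> 'a set \<Rightarrow> 'a set \<Rightarrow> 'a list \<Rightarrow> bool" where
  "reduced_word G P Q ws \<longleftrightarrow>
     set ws \<subseteq> (P - {\<one>\<^bsub>G\<^esub>}) \<union> (Q - {\<one>\<^bsub>G\<^esub>}) \<and>
     successively (\<lambda>x y. (x \<in> P \<and> y \<in> Q) \<or> (x \<in> Q \<and> y \<in> P)) ws"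

definition is_free_product :: "('a, 'b) monoid_scheme \<Rightarrow> 'a set \<Rightarrow> 'a set \<Rightarrow> bool" where
  "is_free_product G P Q \<longleftrightarrow>
     subgroup P G \<and> subgroup Q G \<and> P \<inter> Q = {\<one>\<^bsub>G\<^esub>} \<and>
     (\<forall>g \<in> carrier G. \<exists>!ws. reduced_word G P Q ws \<and> word_prod G ws = g)"

text \<open>Split function f_P * f_Q with respect to the splitting P * Q
  (sum of the values on the letters of the normal form; 0 on the identity).\<close>
definition split_qm :: "('a, 'b) monoid_scheme \<Rightarrow> 'a set \<Rightarrow> 'a set \<Rightarrow>
    ('a \<Rightarrow> real) \<Rightarrow> ('a \<Rightarrow> real) \<Rightarrow> 'a \<Rightarrow> real" where
  "split_qm G P Q fP fQ g =
     (THE r. \<exists>ws. reduced_word G P Q ws \<and> word_prod G ws = g \<and>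
        r = sum_list (map (\<lambda>x. if x \<in> P then fP x else fQ x) ws))"

definition quasimorphism_on :: "('a, 'b) monoid_scheme \<Rightarrow> 'a set \<Rightarrow> ('a \<Rightarrow> real) \<Rightarrow> bool" where
  "quasimorphism_on G H f \<longleftrightarrow>
     (\<exists>D. \<forall>x \<in> H. \<forall>y \<in> H. \<bar>f x + f y - f (x \<otimes>\<^bsub>G\<^esub> y)\<bar> \<le> D)"

definition alternating_on :: "('a, 'b) monoid_scheme \<Rightarrow> 'a set \<Rightarrow> ('a \<Rightarrow> real) \<Rightarrow> bool" where
  "alternating_on G H f \<longleftrightarrow> (\<forall>x \<in> H. f (inv\<^bsub>G\<^esub> x) = - f x)"

definition bounded_on :: "'a set \<Rightarrow> ('a \<Rightarrow> real) \<Rightarrow> bool" where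
  "bounded_on H f \<longleftrightarrow> (\<exists>C. \<forall>x \<in> H. \<bar>f x\<bar> \<le> C)"

definition delta1 :: "('a, 'b) monoid_scheme \<Rightarrow> ('a \<Rightarrow> real) \<Rightarrow> 'a \<times> 'a \<Rightarrow> real" where
  "delta1 G f = (\<lambda>(g, h). f g + f h - f (g \<otimes>\<^bsub>G\<^esub> h))"

text \<open>The class in H^2_b(G,R) of a (bounded) 2-cocycle c: all 2-cochains differing
  from c (on G x G) by the coboundary of a bounded 1-cochain.\<close>
definition hb2_class :: "('a, 'b) monoid_scheme \<Rightarrow> ('a \<times> 'a \<Rightarrow> real) \<Rightarrow> ('a \<times> 'a \<Rightarrow> real) set" where
  "hb2_class G c = {c'. \<exists>b. bounded_on (carrier G) b \<and>
      (\<forall>g \<in> carrier G. \<forall>h \<in> carrier G. c (g, h) - c' (g, h) = delta1 G b (g, h))}"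

definition omega :: "('a, 'b) monoid_scheme \<Rightarrow> ('a \<Rightarrow> real) \<Rightarrow> ('a \<times> 'a \<Rightarrow> real) set" where
  "omega G f = hb2_class G (delta1 G f)"

definition split_classes :: "('a, 'b) monoid_scheme \<Rightarrow> 'a set \<Rightarrow> 'a set \<Rightarrow> ('a \<times> 'a \<Rightarrow> real) set set" where
  "split_classes G P Q = {omega G (split_qm G P Q fP fQ) | fP fQ.
      bounded_on P fP \<and> alternating_on G P fP \<and> bounded_on Q fQ \<and> alternating_on G Q fQ}"

text \<open>f^tau = f_{tau(A)} * f_{tau(B)}, with f_{tau(A)} = f_A o tau^{-1}.\<close>
definition twisted_split :: "('a, 'b) monoid_scheme \<Rightarrow> ('a \<Rightarrow> 'a) \<Rightarrow> 'a set \<Rightarrow> 'a set \<Rightarrow>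
    ('a \<Rightarrow> real) \<Rightarrow> ('a \<Rightarrow> real) \<Rightarrow> 'a \<Rightarrow> real" where
  "twisted_split G \<tau> A B fA fB =
     split_qm G (\<tau> ` A) (\<tau> ` B) (fA \<circ> inv_into (carrier G) \<tau>) (fB \<circ> inv_into (carrier G) \<tau>)"

definition inner_aut :: "('a, 'b) monoid_scheme \<Rightarrow> ('a \<Rightarrow> 'a) \<Rightarrow> bool" where
  "inner_aut G \<sigma> \<longleftrightarrow> (\<exists>x \<in> carrier G. \<forall>g \<in> carrier G. \<sigma> g = x \<otimes>\<^bsub>G\<^esub> g \<otimes>\<^bsub>G\<^esub> inv\<^bsub>G\<^esub> x)"

definition same_outer_class :: "('a, 'b) monoid_scheme \<Rightarrow> ('a \<Rightarrow> 'a) \<Rightarrow> ('a \<Rightarrow> 'a) \<Rightarrow> bool" where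
  "same_outer_class G \<tau>1 \<tau>2 \<longleftrightarrow>
     (\<exists>\<sigma>. inner_aut G \<sigma> \<and> (\<forall>g \<in> carrier G. \<tau>2 g = \<tau>1 (\<sigma> g)))"

end

(*
  Left multiplication by a single letter a of a factor changes a split function by a bounded
  amount: a is either prepended to the normal form, merged with the first letter (costing the
  defect of the factor quasimorphism), or cancels it.  Writing an element y as a word in such
  letters, f(y g) - f(g) is bounded for each fixed y, and since f is alternating so is
  f(g y) - f(g).  If sigma is conjugation by x, transporting normal forms along sigma shows
  f^sigma(g) = f(x^-1 g x), which is therefore at bounded distance from f(g); bounded distance
  gives equal bounded classes.  Bounded functions on the factors are quasimorphisms, so the
  same applies to every split class, giving S = S^sigma.  Automorphisms in the same outer
  class differ by an inner automorphism of the image splitting.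
*)

theory Submission
  imports Defs
begin

section \<open>Bounded functions and bounded classes\<close>

lemma bounded_on_cong:
  "S = T \<Longrightarrow> (\<And>x. x \<in> T \<Longrightarrow> f x = g x) \<Longrightarrow> bounded_on S f = bounded_on T g"
  unfolding bounded_on_def by auto

lemma bounded_on_uminus: "bounded_on S (\<lambda>x. - f x) = bounded_on S f"
  unfolding bounded_on_def by simp

lemma bounded_on_diff:
  assumes "bounded_on S f" and "bounded_on S g"
  shows "bounded_on S (\<lambda>x. f x - g x)"
proof -
  obtain C1 C2 where "\<forall>x\<in>S. \<bar>f x\<bar> \<le> C1" and "\<forall>x\<in>S. \<bar>g x\<bar> \<le> C2"
    using assms unfolding bounded_on_def by blast
  then have "\<forall>x\<in>S. \<bar>f x - g x\<bar> \<le> C1 + C2"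
    by (smt (verit))
  then show ?thesis
    unfolding bounded_on_def by blast
qed

lemma bounded_on_diff_trans:
  assumes "bounded_on S (\<lambda>x. f x - g x)" and "bounded_on S (\<lambda>x. g x - h x)"
  shows "bounded_on S (\<lambda>x. f x - h x)"
proof -
  obtain C1 C2 where "\<forall>x\<in>S. \<bar>f x - g x\<bar> \<le> C1" and "\<forall>x\<in>S. \<bar>g x - h x\<bar> \<le> C2"
    using assms unfolding bounded_on_def by blast
  then have "\<forall>x\<in>S. \<bar>f x - h x\<bar> \<le> C1 + C2"
    by (smt (verit))
  then show ?thesis
    unfolding bounded_on_def by blast
qed

lemma bounded_on_compose:
  assumes "bounded_on S f" and "\<phi> ` T \<subseteq> S"
  shows "bounded_on T (\<lambda>x. f (\<phi> x))"
  using assms unfolding bounded_on_def by blast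

lemma bounded_on_imp_quasimorphism_on:
  assumes "subgroup H G" and "bounded_on H f"
  shows "quasimorphism_on G H f"
proof -
  obtain C where C: "\<forall>x\<in>H. \<bar>f x\<bar> \<le> C"
    using assms(2) unfolding bounded_on_def by blast
  have "\<bar>f x + f y - f (x \<otimes>\<^bsub>G\<^esub> y)\<bar> \<le> 3 * C" if "x \<in> H" "y \<in> H" for x y
    using C that subgroup.m_closed[OF assms(1) that] by (smt (verit))
  then show ?thesis
    unfolding quasimorphism_on_def by blast
qed

lemma hb2_class_eq:
  assumes "bounded_on (carrier G) b"
    and "\<And>g h. g \<in> carrier G \<Longrightarrow> h \<in> carrier G \<Longrightarrow> c (g, h) - c' (g, h) = delta1 G b (g, h)"
  shows "hb2_class G c = hb2_class G c'"
proof -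
  have shift: "hb2_class G c \<subseteq> hb2_class G c'"
    if b: "bounded_on (carrier G) b"
      and cc': "\<And>g h. g \<in> carrier G \<Longrightarrow> h \<in> carrier G \<Longrightarrow> c (g, h) - c' (g, h) = delta1 G b (g, h)"
    for b and c c' :: "'a \<times> 'a \<Rightarrow> real"
  proof
    fix d assume "d \<in> hb2_class G c"
    then obtain b' where b': "bounded_on (carrier G) b'"
      and cd: "\<forall>g\<in>carrier G. \<forall>h\<in>carrier G. c (g, h) - d (g, h) = delta1 G b' (g, h)"
      unfolding hb2_class_def by blast
    have "bounded_on (carrier G) (\<lambda>x. b' x - b x)"
      using b' b by (rule bounded_on_diff)
    moreover have "c' (g, h) - d (g, h) = delta1 G (\<lambda>x. b' x - b x) (g, h)"
      if "g \<in> carrier G" "h \<in> carrier G" for g h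
      using cc'[OF that] bspec[OF bspec[OF cd that(1)] that(2)] unfolding delta1_def by simp
    ultimately show "d \<in> hb2_class G c'"
      unfolding hb2_class_def by blast
  qed
  have "bounded_on (carrier G) (\<lambda>x. - b x)"
    using assms(1) by (simp only: bounded_on_uminus)
  moreover have "c' (g, h) - c (g, h) = delta1 G (\<lambda>x. - b x) (g, h)"
    if "g \<in> carrier G" "h \<in> carrier G" for g h
    using assms(2)[OF that] by (simp add: delta1_def)
  ultimately show ?thesis
    using shift[OF assms] shift by blast
qed

lemma omega_eq_if_bounded_diff:
  assumes "bounded_on (carrier G) (\<lambda>g. f g - f' g)"
  shows "omega G f = omega G f'"
  unfolding omega_def by (rule hb2_class_eq[OF assms]) (simp add: delta1_def)

section \<open>Words, normal forms and automorphisms\<close>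

context group
begin

lemma word_prod_Nil [simp]: "word_prod G [] = \<one>"
  by (simp add: word_prod_def)

lemma word_prod_Cons [simp]: "word_prod G (a # ws) = a \<otimes> word_prod G ws"
  by (simp add: word_prod_def)

lemma word_prod_closed: "set ws \<subseteq> carrier G \<Longrightarrow> word_prod G ws \<in> carrier G"
  by (induction ws) auto

lemma word_prod_append:
  "set xs \<subseteq> carrier G \<Longrightarrow> set ys \<subseteq> carrier G \<Longrightarrow>
    word_prod G (xs @ ys) = word_prod G xs \<otimes> word_prod G ys"
  by (induction xs) (auto simp: word_prod_closed m_assoc)

lemma word_prod_rev_inv:
  "set ws \<subseteq> carrier G \<Longrightarrow> word_prod G (rev (map (\<lambda>x. inv x) ws)) = inv (word_prod G ws)"
proof (induction ws)
  case (Cons a ws)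
  then have "set (rev (map (\<lambda>x. inv x) ws)) \<subseteq> carrier G"
    by auto
  with Cons show ?case
    by (simp add: word_prod_append word_prod_closed inv_mult_group)
qed simp

lemma word_prod_map_hom:
  assumes "\<sigma> \<in> hom G G" and "set ws \<subseteq> carrier G"
  shows "word_prod G (map \<sigma> ws) = \<sigma> (word_prod G ws)"
proof -
  interpret group_hom G G \<sigma>
    using assms(1) by unfold_locales
  show ?thesis
    using assms(2) by (induction ws) (auto simp: word_prod_closed)
qed

lemma reduced_word_Cons:
  "reduced_word G P Q (a # ws) \<longleftrightarrow>
    a \<in> (P - {\<one>}) \<union> (Q - {\<one>}) \<and> reduced_word G P Q ws \<and>
    (ws = [] \<or> (a \<in> P \<and> hd ws \<in> Q) \<or> (a \<in> Q \<and> hd ws \<in> P))"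
  unfolding reduced_word_def by (auto simp: successively_Cons)

lemma reduced_word_swap: "reduced_word G P Q ws \<longleftrightarrow> reduced_word G Q P ws"
proof -
  have symmetric: "(\<lambda>x y. (x \<in> P \<and> y \<in> Q) \<or> (x \<in> Q \<and> y \<in> P)) = (\<lambda>x y. (x \<in> Q \<and> y \<in> P) \<or> (x \<in> P \<and> y \<in> Q))"
    by auto
  show ?thesis
    unfolding reduced_word_def symmetric by (subst Un_commute) (rule refl)
qed

lemma reduced_word_rev: "reduced_word G P Q (rev ws) \<longleftrightarrow> reduced_word G P Q ws"
  unfolding reduced_word_def by (simp add: conj_commute disj_commute)

lemma reduced_word_image:
  assumes "inj_on \<sigma> (carrier G)" and "\<sigma> \<one> = \<one>"
    and "P \<subseteq> carrier G" and "Q \<subseteq> carrier G"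
    and "reduced_word G P Q ws"
  shows "reduced_word G (\<sigma> ` P) (\<sigma> ` Q) (map \<sigma> ws)"
proof -
  have letters: "set ws \<subseteq> (P - {\<one>}) \<union> (Q - {\<one>})"
    and alternating: "successively (\<lambda>x y. (x \<in> P \<and> y \<in> Q) \<or> (x \<in> Q \<and> y \<in> P)) ws"
    using assms(5) unfolding reduced_word_def by auto
  have mem: "\<sigma> x \<in> \<sigma> ` H \<longleftrightarrow> x \<in> H" if "H \<subseteq> carrier G" "x \<in> carrier G" for H x
    using assms(1) that by (auto dest: inj_onD)
  have "\<sigma> x \<noteq> \<one>" if "x \<in> set ws" for x
  proof
    assume "\<sigma> x = \<one>"
    then have "\<sigma> x = \<sigma> \<one>"
      using assms(2) by simp
    moreover have "x \<in> carrier G" and "x \<noteq> \<one>"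
      using assms(3,4) letters that by auto
    ultimately show False
      using inj_onD[OF assms(1)] by blast
  qed
  then have "set (map \<sigma> ws) \<subseteq> (\<sigma> ` P - {\<one>}) \<union> (\<sigma> ` Q - {\<one>})"
    using letters by auto
  moreover have "successively (\<lambda>x y. (x \<in> \<sigma> ` P \<and> y \<in> \<sigma> ` Q) \<or> (x \<in> \<sigma> ` Q \<and> y \<in> \<sigma> ` P)) (map \<sigma> ws)"
    unfolding successively_map
    by (rule successively_mono[OF alternating]) (use mem assms(3,4) letters in blast)
  ultimately show ?thesis
    unfolding reduced_word_def by blast
qed

lemma subgroup_inv_mem_iff:
  assumes "subgroup H G" and "x \<in> carrier G"
  shows "inv x \<in> H \<longleftrightarrow> x \<in> H"
  using subgroup.m_inv_closed[OF assms(1), of "inv x"] subgroup.m_inv_closed[OF assms(1), of x]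
    inv_inv[OF assms(2)] by auto

lemma subgroup_inv_image:
  assumes "subgroup H G"
  shows "(\<lambda>x. inv x) ` H = H"
proof
  show "(\<lambda>x. inv x) ` H \<subseteq> H"
    using subgroup.m_inv_closed[OF assms] by blast
  show "H \<subseteq> (\<lambda>x. inv x) ` H"
  proof
    fix x assume "x \<in> H"
    then have "x = inv (inv x)" and "inv x \<in> H"
      using subgroup.subset[OF assms] subgroup.m_inv_closed[OF assms] by auto
    then show "x \<in> (\<lambda>x. inv x) ` H"
      by blast
  qed
qed

lemma reduced_word_inv:
  assumes "subgroup P G" and "subgroup Q G" and "reduced_word G P Q ws"
  shows "reduced_word G P Q (rev (map (\<lambda>x. inv x) ws))"
  using reduced_word_image[OF inv_inj inv_one subgroup.subset[OF assms(1)] subgroup.subset[OF assms(2)] assms(3)]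
  by (simp add: reduced_word_rev subgroup_inv_image assms)

lemma mult_inv_cancel_left [simp]: "x \<in> carrier G \<Longrightarrow> z \<in> carrier G \<Longrightarrow> x \<otimes> (inv x \<otimes> z) = z"
  by (simp add: m_assoc[symmetric])

lemma inv_mult_cancel_left [simp]: "x \<in> carrier G \<Longrightarrow> z \<in> carrier G \<Longrightarrow> inv x \<otimes> (x \<otimes> z) = z"
  by (simp add: m_assoc[symmetric])

lemma iso_inv_into_apply:
  assumes "\<sigma> \<in> iso G G" and "x \<in> carrier G"
  shows "inv_into (carrier G) \<sigma> (\<sigma> x) = x" and "\<sigma> (inv_into (carrier G) \<sigma> x) = x"
    and "inv_into (carrier G) \<sigma> x \<in> carrier G"
  using assms by (auto simp: iso_iff inv_into_f_f f_inv_into_f inv_into_into)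

lemma inv_into_inner_aut:
  assumes "\<sigma> \<in> iso G G" and "x \<in> carrier G" and "\<forall>g\<in>carrier G. \<sigma> g = x \<otimes> g \<otimes> inv x"
    and "g \<in> carrier G"
  shows "inv_into (carrier G) \<sigma> g = inv x \<otimes> g \<otimes> x"
proof -
  have "\<sigma> (inv x \<otimes> g \<otimes> x) = g"
    using assms(2-4) by (simp add: m_assoc)
  then show ?thesis
    using iso_inv_into_apply(1)[OF assms(1), of "inv x \<otimes> g \<otimes> x"] assms(2,4) by simp
qed

lemma conjugation_iso:
  assumes "y \<in> carrier G"
  shows "(\<lambda>g. y \<otimes> g \<otimes> inv y) \<in> iso G G"
proof -
  have "(\<lambda>g. y \<otimes> g \<otimes> inv y) \<in> hom G G"
    using assms by (intro homI) (simp_all add: m_assoc)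
  moreover have "inj_on (\<lambda>g. y \<otimes> g \<otimes> inv y) (carrier G)"
    using assms by (intro inj_onI) simp
  moreover have "g \<in> (\<lambda>g. y \<otimes> g \<otimes> inv y) ` carrier G" if "g \<in> carrier G" for g
  proof
    show "g = y \<otimes> (inv y \<otimes> g \<otimes> y) \<otimes> inv y"
      using assms that by (simp add: m_assoc)
  qed (use assms that in simp)
  ultimately show ?thesis
    using assms by (auto simp: iso_iff)
qed

lemma same_outer_class_conjugate:
  assumes "\<tau>1 \<in> iso G G" and "same_outer_class G \<tau>1 \<tau>2"
  shows "\<exists>y\<in>carrier G. \<forall>g\<in>carrier G. \<tau>2 g = y \<otimes> \<tau>1 g \<otimes> inv y"
proof -
  interpret group_hom G G \<tau>1
    using assms(1) by unfold_locales (simp add: iso_iff)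
  obtain \<sigma> x where "\<forall>g\<in>carrier G. \<tau>2 g = \<tau>1 (\<sigma> g)" and "x \<in> carrier G"
    and "\<forall>g\<in>carrier G. \<sigma> g = x \<otimes> g \<otimes> inv x"
    using assms(2) unfolding same_outer_class_def inner_aut_def by blast
  then show ?thesis
    by (intro bexI[of _ "\<tau>1 x"]) simp_all
qed

lemma bounded_on_image_inv_into:
  assumes "\<sigma> \<in> iso G G" and "H \<subseteq> carrier G" and "bounded_on H f"
  shows "bounded_on (\<sigma> ` H) (f \<circ> inv_into (carrier G) \<sigma>)"
proof -
  obtain C where "\<forall>x\<in>H. \<bar>f x\<bar> \<le> C"
    using assms(3) unfolding bounded_on_def by blast
  then have "\<forall>y\<in>\<sigma> ` H. \<bar>(f \<circ> inv_into (carrier G) \<sigma>) y\<bar> \<le> C"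
    using assms(2) iso_inv_into_apply(1)[OF assms(1)] by auto
  then show ?thesis
    unfolding bounded_on_def by blast
qed

lemma alternating_on_image_inv_into:
  assumes "\<sigma> \<in> iso G G" and "H \<subseteq> carrier G" and "alternating_on G H f"
  shows "alternating_on G (\<sigma> ` H) (f \<circ> inv_into (carrier G) \<sigma>)"
  unfolding alternating_on_def
proof
  interpret group_hom G G \<sigma>
    using assms(1) by unfold_locales (simp add: iso_iff)
  fix y assume "y \<in> \<sigma> ` H"
  then obtain h where "h \<in> H" and "y = \<sigma> h"
    by blast
  then have "h \<in> carrier G"
    using assms(2) by auto
  then have "inv_into (carrier G) \<sigma> (inv y) = inv h" and "inv_into (carrier G) \<sigma> y = h"
    using \<open>y = \<sigma> h\<close> iso_inv_into_apply(1)[OF assms(1)] by (simp_all flip: hom_inv)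
  then show "(f \<circ> inv_into (carrier G) \<sigma>) (inv y) = - (f \<circ> inv_into (carrier G) \<sigma>) y"
    using assms(3) \<open>h \<in> H\<close> unfolding alternating_on_def by simp
qed

end

section \<open>Split functions on a free product\<close>

definition word_value :: "'a set \<Rightarrow> ('a \<Rightarrow> real) \<Rightarrow> ('a \<Rightarrow> real) \<Rightarrow> 'a list \<Rightarrow> real" where
  "word_value P fP fQ ws = (\<Sum>x\<leftarrow>ws. if x \<in> P then fP x else fQ x)"

lemma word_value_Nil [simp]: "word_value P fP fQ [] = 0"
  by (simp add: word_value_def)

lemma word_value_Cons [simp]:
  "word_value P fP fQ (a # ws) = (if a \<in> P then fP a else fQ a) + word_value P fP fQ ws"
  by (simp add: word_value_def)

lemma word_value_append [simp]:
  "word_value P fP fQ (xs @ ys) = word_value P fP fQ xs + word_value P fP fQ ys"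
  by (simp add: word_value_def)

locale free_product = group G for G :: "('a, 'b) monoid_scheme" (structure) +
  fixes P Q :: "'a set"
  assumes is_free_product: "is_free_product G P Q"
begin

lemma subgroup_P: "subgroup P G" and subgroup_Q: "subgroup Q G" and P_Int_Q: "P \<inter> Q = {\<one>}"
  using is_free_product unfolding is_free_product_def by auto

lemma P_subset: "P \<subseteq> carrier G" and Q_subset: "Q \<subseteq> carrier G"
  using subgroup.subset subgroup_P subgroup_Q by auto

lemma normal_form_ex1: "g \<in> carrier G \<Longrightarrow> \<exists>!ws. reduced_word G P Q ws \<and> word_prod G ws = g"
  using is_free_product unfolding is_free_product_def by (elim conjE) (rule bspec)

lemma normal_form_exists:
  assumes "g \<in> carrier G"
  obtains ws where "reduced_word G P Q ws" and "word_prod G ws = g"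
  using ex1_implies_ex[OF normal_form_ex1[OF assms]] that by blast

lemma reduced_word_closed: "reduced_word G P Q ws \<Longrightarrow> set ws \<subseteq> carrier G"
  using P_subset Q_subset unfolding reduced_word_def by blast

lemma normal_form_unique:
  assumes "reduced_word G P Q ws" and "reduced_word G P Q vs"
    and "word_prod G ws = word_prod G vs"
  shows "ws = vs"
  using normal_form_ex1[OF word_prod_closed[OF reduced_word_closed[OF assms(1)]]] assms
  by (elim ex1E) metis

lemma split_qm_word_prod:
  assumes "reduced_word G P Q ws"
  shows "split_qm G P Q fP fQ (word_prod G ws) = word_value P fP fQ ws"
  unfolding split_qm_def word_value_def
proof (rule the_equality)
  show "\<exists>vs. reduced_word G P Q vs \<and> word_prod G vs = word_prod G ws \<and>
    (\<Sum>x\<leftarrow>ws. if x \<in> P then fP x else fQ x) = (\<Sum>x\<leftarrow>vs. if x \<in> P then fP x else fQ x)"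
    using assms by blast
next
  fix r
  assume "\<exists>vs. reduced_word G P Q vs \<and> word_prod G vs = word_prod G ws \<and>
    r = (\<Sum>x\<leftarrow>vs. if x \<in> P then fP x else fQ x)"
  then obtain vs where "reduced_word G P Q vs" "word_prod G vs = word_prod G ws"
    and r: "r = (\<Sum>x\<leftarrow>vs. if x \<in> P then fP x else fQ x)"
    by blast
  then have "vs = ws"
    using normal_form_unique assms by blast
  then show "r = (\<Sum>x\<leftarrow>ws. if x \<in> P then fP x else fQ x)"
    using r by simp
qed

lemma free_product_swap: "free_product G Q P"
proof -
  have "is_free_product G Q P"
    using is_free_product unfolding is_free_product_def reduced_word_swap[of P Q]
    by (simp add: Int_commute conj_commute)
  then show ?thesis
    by (simp add: free_product_def free_product_axioms_def is_group)
qed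

lemma word_value_swap:
  assumes "reduced_word G P Q ws"
  shows "word_value P fP fQ ws = word_value Q fQ fP ws"
proof -
  have "(if x \<in> P then fP x else fQ x) = (if x \<in> Q then fQ x else fP x)" if "x \<in> set ws" for x
    using assms P_Int_Q that unfolding reduced_word_def by auto
  then show ?thesis
    unfolding word_value_def by (intro arg_cong[where f = sum_list] map_cong) auto
qed

lemma split_qm_swap:
  assumes "g \<in> carrier G"
  shows "split_qm G P Q fP fQ g = split_qm G Q P fQ fP g"
proof -
  interpret swapped: free_product G Q P
    by (rule free_product_swap)
  obtain ws where ws: "reduced_word G P Q ws" "word_prod G ws = g"
    using normal_form_exists[OF assms] .
  have "split_qm G P Q fP fQ g = word_value P fP fQ ws"
    using split_qm_word_prod[OF ws(1)] ws(2) by simp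
  also have "\<dots> = word_value Q fQ fP ws"
    using word_value_swap[OF ws(1)] .
  also have "\<dots> = split_qm G Q P fQ fP g"
    using swapped.split_qm_word_prod ws reduced_word_swap by metis
  finally show ?thesis .
qed

lemma word_value_inv:
  assumes "alternating_on G P fP" and "alternating_on G Q fQ" and "set ws \<subseteq> P \<union> Q"
  shows "word_value P fP fQ (rev (map (\<lambda>x. inv x) ws)) = - word_value P fP fQ ws"
  using assms(3)
proof (induction ws)
  case (Cons a ws)
  then have "a \<in> carrier G"
    using P_subset Q_subset by auto
  then have "(if inv a \<in> P then fP (inv a) else fQ (inv a)) = - (if a \<in> P then fP a else fQ a)"
    using assms(1,2) Cons.prems subgroup_inv_mem_iff[OF subgroup_P] unfolding alternating_on_def by auto
  with Cons show ?case
    by simp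
qed simp

lemma split_qm_inv:
  assumes "alternating_on G P fP" and "alternating_on G Q fQ" and "g \<in> carrier G"
  shows "split_qm G P Q fP fQ (inv g) = - split_qm G P Q fP fQ g"
proof -
  obtain ws where ws: "reduced_word G P Q ws" "word_prod G ws = g"
    using normal_form_exists[OF assms(3)] .
  have "set ws \<subseteq> P \<union> Q"
    using ws(1) unfolding reduced_word_def by blast
  have "split_qm G P Q fP fQ (inv g) = split_qm G P Q fP fQ (word_prod G (rev (map (\<lambda>x. inv x) ws)))"
    using word_prod_rev_inv[OF reduced_word_closed[OF ws(1)]] ws(2) by simp
  also have "\<dots> = - word_value P fP fQ ws"
    using split_qm_word_prod[OF reduced_word_inv[OF subgroup_P subgroup_Q ws(1)]]
      word_value_inv[OF assms(1,2) \<open>set ws \<subseteq> P \<union> Q\<close>] by simp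
  also have "\<dots> = - split_qm G P Q fP fQ g"
    using split_qm_word_prod[OF ws(1)] ws(2) by simp
  finally show ?thesis .
qed

lemma split_qm_left_mult_letter:
  fixes fP fQ :: "'a \<Rightarrow> real"
  assumes "a \<in> P" and "a \<noteq> \<one>" and "g \<in> carrier G"
  defines "d \<equiv> split_qm G P Q fP fQ (a \<otimes> g) - split_qm G P Q fP fQ g"
  shows "d = fP a \<or> d = - fP (inv a) \<or> (\<exists>w\<in>P. d = fP (a \<otimes> w) - fP w)"
proof -
  have a_carrier: "a \<in> carrier G"
    using assms(1) P_subset by blast
  obtain ws where ws: "reduced_word G P Q ws" "word_prod G ws = g"
    using normal_form_exists[OF assms(3)] .
  show ?thesis
  proof (cases ws)
    case Nil
    then have "reduced_word G P Q [a]" and "g = \<one>"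
      using assms(1,2) ws by (simp_all add: reduced_word_Cons reduced_word_def)
    then have "d = fP a"
      using split_qm_word_prod[of "[a]"] split_qm_word_prod[of "[]"] assms(1) a_carrier
      by (simp add: d_def reduced_word_def)
    then show ?thesis ..
  next
    case (Cons w rest)
    have w: "w \<in> (P - {\<one>}) \<union> (Q - {\<one>})" and rest: "reduced_word G P Q rest"
      and alternates: "rest = [] \<or> (w \<in> P \<and> hd rest \<in> Q) \<or> (w \<in> Q \<and> hd rest \<in> P)"
      using ws(1) Cons by (auto simp: reduced_word_Cons)
    have w_carrier: "w \<in> carrier G" and rest_carrier: "set rest \<subseteq> carrier G"
      using reduced_word_closed[OF ws(1)] Cons by auto
    have value_g: "split_qm G P Q fP fQ g = (if w \<in> P then fP w else fQ w) + word_value P fP fQ rest"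
      using split_qm_word_prod[OF ws(1)] ws(2) Cons by simp
    show ?thesis
    proof (cases "w \<in> P")
      case False
      then have "reduced_word G P Q (a # ws)"
        using assms(1,2) ws(1) w Cons by (auto simp: reduced_word_Cons)
      then have "d = fP a"
        using split_qm_word_prod[of "a # ws"] ws(2) assms(1) value_g False Cons by (simp add: d_def)
      then show ?thesis ..
    next
      case True
      have ag: "a \<otimes> g = (a \<otimes> w) \<otimes> word_prod G rest"
        using ws(2) Cons a_carrier w_carrier rest_carrier by (simp add: m_assoc word_prod_closed)
      show ?thesis
      proof (cases "a \<otimes> w = \<one>")
        case True
        then have "w = inv a"
          using inv_equality[OF inv_comm[OF True a_carrier w_carrier] a_carrier w_carrier] by simp
        moreover have "split_qm G P Q fP fQ (a \<otimes> g) = word_value P fP fQ rest"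
          using split_qm_word_prod[OF rest] ag True rest_carrier by (simp add: word_prod_closed)
        ultimately have "d = - fP (inv a)"
          using value_g \<open>w \<in> P\<close> by (simp add: d_def)
        then show ?thesis by blast
      next
        case False
        have "a \<otimes> w \<in> P" and "w \<notin> Q"
          using assms(1) \<open>w \<in> P\<close> w P_Int_Q subgroup.m_closed[OF subgroup_P] by auto
        then have "reduced_word G P Q ((a \<otimes> w) # rest)"
          using False rest alternates by (auto simp: reduced_word_Cons)
        then have "d = fP (a \<otimes> w) - fP w"
          using split_qm_word_prod[of "(a \<otimes> w) # rest"] ag value_g \<open>a \<otimes> w \<in> P\<close> \<open>w \<in> P\<close>
          by (simp add: d_def)
        then show ?thesis
          using \<open>w \<in> P\<close> by blast
      qed
    qed
  qed
qed

lemma split_qm_left_mult_letter_bounded: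
  assumes "quasimorphism_on G P fP" and "a \<in> P"
  shows "bounded_on (carrier G) (\<lambda>g. split_qm G P Q fP fQ (a \<otimes> g) - split_qm G P Q fP fQ g)"
proof -
  obtain D where D: "\<forall>x\<in>P. \<forall>y\<in>P. \<bar>fP x + fP y - fP (x \<otimes> y)\<bar> \<le> D"
    using assms(1) unfolding quasimorphism_on_def by blast
  have "\<bar>split_qm G P Q fP fQ (a \<otimes> g) - split_qm G P Q fP fQ g\<bar> \<le> \<bar>fP a\<bar> + \<bar>fP (inv a)\<bar> + \<bar>D\<bar>"
    if "g \<in> carrier G" for g
  proof (cases "a = \<one>")
    case True
    then show ?thesis
      using that by simp
  next
    case False
    have "\<bar>fP (a \<otimes> w) - fP w\<bar> \<le> \<bar>fP a\<bar> + \<bar>D\<bar>" if "w \<in> P" for w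
      using D assms(2) that by fastforce
    then show ?thesis
      using split_qm_left_mult_letter[OF assms(2) False \<open>g \<in> carrier G\<close>, of fP fQ] by fastforce
  qed
  then show ?thesis
    unfolding bounded_on_def by blast
qed

lemma split_qm_left_mult_bounded:
  assumes "quasimorphism_on G P fP" and "quasimorphism_on G Q fQ" and "y \<in> carrier G"
  shows "bounded_on (carrier G) (\<lambda>g. split_qm G P Q fP fQ (y \<otimes> g) - split_qm G P Q fP fQ g)"
proof -
  interpret swapped: free_product G Q P
    by (rule free_product_swap)
  have letter: "bounded_on (carrier G) (\<lambda>g. split_qm G P Q fP fQ (a \<otimes> g) - split_qm G P Q fP fQ g)"
    if "a \<in> P \<union> Q" for a
  proof (cases "a \<in> P")
    case True
    then show ?thesis
      using split_qm_left_mult_letter_bounded[OF assms(1)] by blast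
  next
    case False
    then have "a \<in> Q" and "a \<in> carrier G"
      using that Q_subset by auto
    then show ?thesis
      using swapped.split_qm_left_mult_letter_bounded[OF assms(2), of a fP]
      by (simp add: split_qm_swap cong: bounded_on_cong)
  qed
  have "bounded_on (carrier G)
      (\<lambda>g. split_qm G P Q fP fQ (word_prod G ws \<otimes> g) - split_qm G P Q fP fQ g)"
    if "set ws \<subseteq> P \<union> Q" for ws
    using that
  proof (induction ws)
    case Nil
    show ?case
      unfolding bounded_on_def by (intro exI[of _ 0]) simp
  next
    case (Cons a ws)
    then have carrier: "a \<in> carrier G" "word_prod G ws \<in> carrier G"
      using P_subset Q_subset word_prod_closed[of ws] by auto
    have "bounded_on (carrier G) (\<lambda>g. split_qm G P Q fP fQ (a \<otimes> (word_prod G ws \<otimes> g))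
        - split_qm G P Q fP fQ (word_prod G ws \<otimes> g))"
      by (rule bounded_on_compose[OF letter]) (use Cons.prems carrier in auto)
    from bounded_on_diff_trans[OF this Cons.IH] Cons.prems carrier show ?case
      by (simp add: m_assoc cong: bounded_on_cong)
  qed
  moreover obtain ws where "reduced_word G P Q ws" and "word_prod G ws = y"
    using normal_form_exists[OF assms(3)] .
  ultimately show ?thesis
    unfolding reduced_word_def by blast
qed

lemma split_qm_right_mult_bounded:
  assumes "quasimorphism_on G P fP" and "quasimorphism_on G Q fQ"
    and "alternating_on G P fP" and "alternating_on G Q fQ" and "y \<in> carrier G"
  shows "bounded_on (carrier G) (\<lambda>g. split_qm G P Q fP fQ (g \<otimes> y) - split_qm G P Q fP fQ g)"
proof -
  have "bounded_on (carrier G)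
      (\<lambda>g. split_qm G P Q fP fQ (inv y \<otimes> inv g) - split_qm G P Q fP fQ (inv g))"
    by (rule bounded_on_compose[OF split_qm_left_mult_bounded[OF assms(1,2)]]) (use assms(5) in auto)
  moreover have "split_qm G P Q fP fQ (inv y \<otimes> inv g) - split_qm G P Q fP fQ (inv g)
      = - (split_qm G P Q fP fQ (g \<otimes> y) - split_qm G P Q fP fQ g)" if "g \<in> carrier G" for g
    using that assms(5) split_qm_inv[OF assms(3,4)] by (simp add: inv_mult_group[symmetric])
  ultimately have "bounded_on (carrier G)
      (\<lambda>g. - (split_qm G P Q fP fQ (g \<otimes> y) - split_qm G P Q fP fQ g))"
    by (simp cong: bounded_on_cong)
  then show ?thesis
    by (simp only: bounded_on_uminus)
qed

lemma split_qm_conj_bounded: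
  assumes "quasimorphism_on G P fP" and "quasimorphism_on G Q fQ"
    and "alternating_on G P fP" and "alternating_on G Q fQ" and "x \<in> carrier G"
  shows "bounded_on (carrier G)
    (\<lambda>g. split_qm G P Q fP fQ (inv x \<otimes> g \<otimes> x) - split_qm G P Q fP fQ g)"
proof -
  have "bounded_on (carrier G)
      (\<lambda>g. split_qm G P Q fP fQ (inv x \<otimes> g \<otimes> x) - split_qm G P Q fP fQ (inv x \<otimes> g))"
    by (rule bounded_on_compose[OF split_qm_right_mult_bounded[OF assms]]) (use assms(5) in auto)
  from bounded_on_diff_trans[OF this split_qm_left_mult_bounded[OF assms(1,2) inv_closed[OF assms(5)]]]
  show ?thesis .
qed

lemma free_product_image:
  assumes "\<sigma> \<in> iso G G"
  shows "free_product G (\<sigma> ` P) (\<sigma> ` Q)"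
proof -
  define \<psi> where "\<psi> = inv_into (carrier G) \<sigma>"
  have \<psi>: "\<psi> \<in> iso G G"
    unfolding \<psi>_def using iso_set_sym[OF assms] .
  have inj: "inj_on \<sigma> (carrier G)" and one: "\<sigma> \<one> = \<one>" and inj\<psi>: "inj_on \<psi> (carrier G)" and one\<psi>: "\<psi> \<one> = \<one>"
    using assms \<psi> by (auto simp: iso_iff hom_one)
  have image_subset: "\<sigma> ` P \<subseteq> carrier G" "\<sigma> ` Q \<subseteq> carrier G"
    using assms P_subset Q_subset by (auto simp: iso_iff)
  have \<psi>_\<sigma>_image: "\<psi> ` \<sigma> ` P = P" "\<psi> ` \<sigma> ` Q = Q"
    unfolding \<psi>_def using inj P_subset Q_subset by auto
  have "subgroup (\<sigma> ` P) G" and "subgroup (\<sigma> ` Q) G"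
    using subgroup.iso_subgroup[OF _ is_group is_group assms] subgroup_P subgroup_Q by auto
  moreover have "\<sigma> ` P \<inter> \<sigma> ` Q = {\<one>}"
    using inj_on_image_Int[OF inj P_subset Q_subset] P_Int_Q one by simp
  moreover have "\<exists>!ws. reduced_word G (\<sigma> ` P) (\<sigma> ` Q) ws \<and> word_prod G ws = g"
    if g: "g \<in> carrier G" for g
  proof -
    obtain ws where ws: "reduced_word G P Q ws" "word_prod G ws = \<psi> g"
      using normal_form_exists iso_inv_into_apply(3)[OF assms g] unfolding \<psi>_def by metis
    have "word_prod G (map \<sigma> ws) = g"
      using word_prod_map_hom[OF iso_imp_homomorphism[OF assms] reduced_word_closed[OF ws(1)]] ws(2)
        iso_inv_into_apply(2)[OF assms g] unfolding \<psi>_def by simp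
    moreover have "vs = map \<sigma> ws"
      if "reduced_word G (\<sigma> ` P) (\<sigma> ` Q) vs" and "word_prod G vs = g" for vs
    proof -
      have vs_carrier: "set vs \<subseteq> carrier G"
        using that(1) image_subset unfolding reduced_word_def by blast
      have "reduced_word G P Q (map \<psi> vs)"
        using reduced_word_image[OF inj\<psi> one\<psi> image_subset that(1)] \<psi>_\<sigma>_image by simp
      moreover have "word_prod G (map \<psi> vs) = \<psi> g"
        using word_prod_map_hom[OF iso_imp_homomorphism[OF \<psi>] vs_carrier] that(2) by simp
      ultimately have "map \<psi> vs = ws"
        using normal_form_unique ws by metis
      then have "map \<sigma> (map \<psi> vs) = map \<sigma> ws"
        by simp
      then show ?thesis
        using vs_carrier iso_inv_into_apply(2)[OF assms] unfolding \<psi>_def by (simp add: map_idI subset_iff)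
    qed
    ultimately show ?thesis
      using reduced_word_image[OF inj one P_subset Q_subset ws(1)] by blast
  qed
  ultimately show ?thesis
    by (simp add: free_product_def free_product_axioms_def is_free_product_def is_group)
qed

lemma split_qm_image:
  assumes "\<sigma> \<in> iso G G" and "g \<in> carrier G"
  shows "split_qm G (\<sigma> ` P) (\<sigma> ` Q) (fP \<circ> inv_into (carrier G) \<sigma>) (fQ \<circ> inv_into (carrier G) \<sigma>) g
    = split_qm G P Q fP fQ (inv_into (carrier G) \<sigma> g)"
proof -
  interpret image: free_product G "\<sigma> ` P" "\<sigma> ` Q"
    using free_product_image[OF assms(1)] .
  have inj: "inj_on \<sigma> (carrier G)" and one: "\<sigma> \<one> = \<one>"
    using assms(1) by (auto simp: iso_iff hom_one)
  obtain ws where ws: "reduced_word G P Q ws" "word_prod G ws = inv_into (carrier G) \<sigma> g"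
    using normal_form_exists iso_inv_into_apply(3)[OF assms] by metis
  have ws_carrier: "set ws \<subseteq> carrier G"
    using reduced_word_closed[OF ws(1)] .
  have "word_prod G (map \<sigma> ws) = g"
    using word_prod_map_hom[OF iso_imp_homomorphism[OF assms(1)] ws_carrier] ws(2)
      iso_inv_into_apply(2)[OF assms] by simp
  moreover have "word_value (\<sigma> ` P) (fP \<circ> inv_into (carrier G) \<sigma>) (fQ \<circ> inv_into (carrier G) \<sigma>) (map \<sigma> ws)
      = word_value P fP fQ ws"
    using ws_carrier P_subset inj
    by (induction ws) (auto simp: iso_inv_into_apply(1)[OF assms(1)] inj_on_image_mem_iff)
  ultimately show ?thesis
    using image.split_qm_word_prod[OF reduced_word_image[OF inj one P_subset Q_subset ws(1)]]
      split_qm_word_prod[OF ws(1)] ws(2) by simp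
qed

lemma twisted_split_inner_bounded:
  assumes "quasimorphism_on G P fP" and "quasimorphism_on G Q fQ"
    and "alternating_on G P fP" and "alternating_on G Q fQ"
    and "\<sigma> \<in> iso G G" and "inner_aut G \<sigma>"
  shows "bounded_on (carrier G) (\<lambda>g. split_qm G P Q fP fQ g - twisted_split G \<sigma> P Q fP fQ g)"
proof -
  obtain x where x: "x \<in> carrier G" "\<forall>g\<in>carrier G. \<sigma> g = x \<otimes> g \<otimes> inv x"
    using assms(6) unfolding inner_aut_def by blast
  have "twisted_split G \<sigma> P Q fP fQ g = split_qm G P Q fP fQ (inv x \<otimes> g \<otimes> x)" if "g \<in> carrier G" for g
    using split_qm_image[OF assms(5) that] inv_into_inner_aut[OF assms(5) x that]
    unfolding twisted_split_def by simp
  then have "bounded_on (carrier G) (\<lambda>g. - (split_qm G P Q fP fQ g - twisted_split G \<sigma> P Q fP fQ g))"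
    using split_qm_conj_bounded[OF assms(1-4) x(1)] by (simp cong: bounded_on_cong)
  then show ?thesis
    by (simp only: bounded_on_uminus)
qed

lemma split_classes_subset_inner_aut:
  assumes "\<sigma> \<in> iso G G" and "inner_aut G \<sigma>"
  shows "split_classes G P Q \<subseteq> split_classes G (\<sigma> ` P) (\<sigma> ` Q)"
proof
  fix c assume "c \<in> split_classes G P Q"
  then obtain fP fQ where c: "c = omega G (split_qm G P Q fP fQ)"
    and fP: "bounded_on P fP" "alternating_on G P fP"
    and fQ: "bounded_on Q fQ" "alternating_on G Q fQ"
    unfolding split_classes_def by blast
  have "c = omega G (twisted_split G \<sigma> P Q fP fQ)"
    unfolding c using twisted_split_inner_bounded[OF
      bounded_on_imp_quasimorphism_on[OF subgroup_P fP(1)] bounded_on_imp_quasimorphism_on[OF subgroup_Q fQ(1)]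
      fP(2) fQ(2) assms]
    by (rule omega_eq_if_bounded_diff)
  then show "c \<in> split_classes G (\<sigma> ` P) (\<sigma> ` Q)"
    unfolding split_classes_def twisted_split_def
    using bounded_on_image_inv_into[OF assms(1)] alternating_on_image_inv_into[OF assms(1)]
      P_subset Q_subset fP fQ by blast
qed

lemma split_classes_inner_aut:
  assumes "\<sigma> \<in> iso G G" and "inner_aut G \<sigma>"
  shows "split_classes G P Q = split_classes G (\<sigma> ` P) (\<sigma> ` Q)"
proof
  show "split_classes G P Q \<subseteq> split_classes G (\<sigma> ` P) (\<sigma> ` Q)"
    using split_classes_subset_inner_aut[OF assms] .
  interpret image: free_product G "\<sigma> ` P" "\<sigma> ` Q"
    using free_product_image[OF assms(1)] .
  obtain x where x: "x \<in> carrier G" "\<forall>g\<in>carrier G. \<sigma> g = x \<otimes> g \<otimes> inv x"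
    using assms(2) unfolding inner_aut_def by blast
  have "inner_aut G (inv_into (carrier G) \<sigma>)"
    unfolding inner_aut_def using inv_into_inner_aut[OF assms(1) x] x(1)
    by (intro bexI[of _ "inv x"]) simp_all
  moreover have "inv_into (carrier G) \<sigma> ` \<sigma> ` H = H" if "H \<subseteq> carrier G" for H
  proof -
    have "inv_into (carrier G) \<sigma> ` \<sigma> ` H = (\<lambda>x. x) ` H"
      unfolding image_image by (rule image_cong) (use that iso_inv_into_apply(1)[OF assms(1)] in auto)
    then show ?thesis
      by simp
  qed
  ultimately show "split_classes G (\<sigma> ` P) (\<sigma> ` Q) \<subseteq> split_classes G P Q"
    using image.split_classes_subset_inner_aut[OF iso_set_sym[OF assms(1)]] P_subset Q_subset by simp
qed

lemma split_classes_same_outer_class: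
  assumes "\<tau>1 \<in> iso G G" and "same_outer_class G \<tau>1 \<tau>2"
  shows "split_classes G (\<tau>1 ` P) (\<tau>1 ` Q) = split_classes G (\<tau>2 ` P) (\<tau>2 ` Q)"
proof -
  interpret image: free_product G "\<tau>1 ` P" "\<tau>1 ` Q"
    using free_product_image[OF assms(1)] .
  obtain y where y: "y \<in> carrier G" "\<forall>g\<in>carrier G. \<tau>2 g = y \<otimes> \<tau>1 g \<otimes> inv y"
    using same_outer_class_conjugate[OF assms] by blast
  have "\<tau>2 ` H = (\<lambda>g. y \<otimes> g \<otimes> inv y) ` \<tau>1 ` H" if "H \<subseteq> carrier G" for H
    unfolding image_image by (rule image_cong) (use that y(2) in auto)
  moreover have "inner_aut G (\<lambda>g. y \<otimes> g \<otimes> inv y)"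
    unfolding inner_aut_def using y(1) by blast
  ultimately show ?thesis
    using image.split_classes_inner_aut[OF conjugation_iso[OF y(1)]] P_subset Q_subset by simp
qed

end

theorem proposition3p15:
  fixes G :: "('a, 'b) monoid_scheme"
    and A B :: "'a set"
    and fA fB :: "'a \<Rightarrow> real"
    and \<sigma> :: "'a \<Rightarrow> 'a"
  assumes "group G"
    and "is_free_product G A B"
    and "A \<noteq> {\<one>\<^bsub>G\<^esub>}" and "B \<noteq> {\<one>\<^bsub>G\<^esub>}"
    and "quasimorphism_on G A fA" and "alternating_on G A fA"
    and "quasimorphism_on G B fB" and "alternating_on G B fB"
    and "\<sigma> \<in> iso G G" and "inner_aut G \<sigma>"
  shows "(\<exists>C. \<forall>g \<in> carrier G.
            \<bar>split_qm G A B fA fB g - twisted_split G \<sigma> A B fA fB g\<bar> \<le> C)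
       \<and> omega G (split_qm G A B fA fB) = omega G (twisted_split G \<sigma> A B fA fB)
       \<and> split_classes G A B = split_classes G (\<sigma> ` A) (\<sigma> ` B)
       \<and> (\<forall>\<tau>1 \<tau>2. \<tau>1 \<in> iso G G \<longrightarrow> \<tau>2 \<in> iso G G \<longrightarrow> same_outer_class G \<tau>1 \<tau>2 \<longrightarrow>
            split_classes G (\<tau>1 ` A) (\<tau>1 ` B) = split_classes G (\<tau>2 ` A) (\<tau>2 ` B))"
proof -
  interpret free_product G A B
    using assms(1,2) by (simp add: free_product_def free_product_axioms_def)
  have bounded: "bounded_on (carrier G) (\<lambda>g. split_qm G A B fA fB g - twisted_split G \<sigma> A B fA fB g)"
    using twisted_split_inner_bounded[OF assms(5,7,6,8,9,10)] .
  then show ?thesis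
    using omega_eq_if_bounded_diff[OF bounded] split_classes_inner_aut[OF assms(9,10)]
      split_classes_same_outer_class
    unfolding bounded_on_def by blast
qed

end
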